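(* For $r\in\mathbb{Z}$ and $\alpha=(\alpha_n)_{n\in\mathbb{Z}}\in(k^\times)^{\mathbb{Z}}$ put $r\cdot\alpha=(\alpha_{n-r})_{n\in\mathbb{Z}}$, and let $(k^\times)^{\mathbb{Z}}\rtimes\mathbb{Z}$ be the set of pairs $(\alpha,r)$ with multiplication $(\alpha,r)(\beta,t)=(\alpha\,(r\cdot\beta),\,r+t)$ (product in $(k^\times)^{\mathbb{Z}}$ componentwise). Let $\theta_r:H\to H$ be the linear map $\theta_r(x^ny^m)=x^{n+r}y^m$, and let $\phi_\alpha:H\to H$ be the linear map with $\phi_\alpha(x^n)=x^n$ and $\phi_\alpha(x^ny^m)=\big(\prod_{i=0}^{m-1}\alpha_{n+i}\big)x^ny^m$ for $m\geq1$. Then $$\Psi:(k^\times)^{\mathbb{Z}}\rtimes\mathbb{Z}\to\mathrm{Aut}_c^{gr}(H),\qquad \Psi(\alpha,r)=\phi_\alpha\theta_r,$$ is a group isomorphism.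
   Context: Let $k$ be a field and $0\neq q\in k$ not a root of unity. Let $H=k_q[x,x^{-1},y]$ be the $k$-algebra generated by $x,x^{-1},y$ subject to $xx^{-1}=x^{-1}x=1$, $yx=qxy$, a Hopf algebra with $\Delta(x)=x\otimes x$, $\Delta(x^{-1})=x^{-1}\otimes x^{-1}$, $\Delta(y)=y\otimes x+1\otimes y$, $\varepsilon(x)=1$, $\varepsilon(y)=0$. The elements $x^ny^m$ ($n\in\mathbb{Z}$, $m\in\mathbb{N}$) form a $k$-basis, and $\Delta(x^ny^m)=\sum_{i=0}^m\binom{m}{i}_q x^ny^i\otimes x^{n+i}y^{m-i}$ with $\binom{m}{i}_q$ the $q$-binomial coefficients $\frac{(m)!_q}{(i)!_q(m-i)!_q}$, $(n)_q=1+q+\dots+q^{n-1}$, $(n)!_q=(n)_q\cdots(1)_q$. Let $H_0=\mathrm{span}\{x^n\}$, $H(m)=H_0y^m$, so $H=\bigoplus_{m\ge0}H(m)$ is a graded coalgebra. $\mathrm{Aut}_c^{gr}(H)$ is the group (under composition) of coalgebra automorphisms $\phi$ of $H$ with $\phi(H(m))\subseteq H(m)$ for all $m\geq0$. *)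

theory Defs
  imports "HOL-Library.Poly_Mapping" "HOL-Algebra.Group"
begin

text \<open>The quantum plane Hopf algebra H = k_q[x,x^-1,y] is modelled as the k-vector space
  of finitely supported coefficient functions on its basis; the basis element x^n y^m is
  indexed by the pair (n,m) :: int * nat.  The tensor product H (x) H is modelled likewise
  with basis (x^n y^m) (x) (x^n' y^m') indexed by ((n,m),(n',m')).\<close>

type_synonym 'k qH = "(int \<times> nat) \<Rightarrow>\<^sub>0 'k"
type_synonym 'k qHH = "((int \<times> nat) \<times> (int \<times> nat)) \<Rightarrow>\<^sub>0 'k"

definition smul :: "'k::field \<Rightarrow> ('a \<Rightarrow>\<^sub>0 'k) \<Rightarrow> ('a \<Rightarrow>\<^sub>0 'k)" where
  "smul c v = Poly_Mapping.map (\<lambda>a. c * a) v"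

definition lin_ext :: "('a \<Rightarrow> ('b \<Rightarrow>\<^sub>0 'k::field)) \<Rightarrow> ('a \<Rightarrow>\<^sub>0 'k) \<Rightarrow> ('b \<Rightarrow>\<^sub>0 'k)" where
  "lin_ext g v = (\<Sum>a\<in>Poly_Mapping.keys v. smul (Poly_Mapping.lookup v a) (g a))"

definition is_linear :: "(('a \<Rightarrow>\<^sub>0 'k::field) \<Rightarrow> ('b \<Rightarrow>\<^sub>0 'k)) \<Rightarrow> bool" where
  "is_linear f \<longleftrightarrow> (\<forall>u v. f (u + v) = f u + f v) \<and> (\<forall>c v. f (smul c v) = smul c (f v))"

definition qint :: "'k::field \<Rightarrow> nat \<Rightarrow> 'k" where
  "qint q n = (\<Sum>j<n. q ^ j)"

definition qfact :: "'k::field \<Rightarrow> nat \<Rightarrow> 'k" where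
  "qfact q n = (\<Prod>j\<in>{1..n}. qint q j)"

definition qbinom :: "'k::field \<Rightarrow> nat \<Rightarrow> nat \<Rightarrow> 'k" where
  "qbinom q m i = qfact q m / (qfact q i * qfact q (m - i))"

definition qDelta :: "'k::field \<Rightarrow> 'k qH \<Rightarrow> 'k qHH" where
  "qDelta q = lin_ext (\<lambda>(n, m).
      (\<Sum>i\<in>{0..m}. Poly_Mapping.single ((n, i), (n + int i, m - i)) (qbinom q m i)))"

definition qeps :: "'k::field qH \<Rightarrow> 'k" where
  "qeps v = (\<Sum>a\<in>Poly_Mapping.keys v. if snd a = 0 then Poly_Mapping.lookup v a else 0)"

definition tens :: "('a \<Rightarrow>\<^sub>0 'k::field) \<Rightarrow> ('b \<Rightarrow>\<^sub>0 'k) \<Rightarrow> (('a \<times> 'b) \<Rightarrow>\<^sub>0 'k)" where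
  "tens u v = (\<Sum>a\<in>Poly_Mapping.keys u. \<Sum>b\<in>Poly_Mapping.keys v.
      Poly_Mapping.single (a, b) (Poly_Mapping.lookup u a * Poly_Mapping.lookup v b))"

definition tens_map :: "('k::field qH \<Rightarrow> 'k qH) \<Rightarrow> ('k qH \<Rightarrow> 'k qH) \<Rightarrow> 'k qHH \<Rightarrow> 'k qHH" where
  "tens_map f g = lin_ext (\<lambda>(a, b). tens (f (Poly_Mapping.single a 1)) (g (Poly_Mapping.single b 1)))"

definition coalg_aut :: "'k::field \<Rightarrow> ('k qH \<Rightarrow> 'k qH) \<Rightarrow> bool" where
  "coalg_aut q f \<longleftrightarrow> is_linear f \<and> bij f \<and>
     (\<forall>v. qDelta q (f v) = tens_map f f (qDelta q v)) \<and> (\<forall>v. qeps (f v) = qeps v)"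

definition in_Hm :: "nat \<Rightarrow> 'k::field qH \<Rightarrow> bool" where
  "in_Hm m v \<longleftrightarrow> (\<forall>a\<in>Poly_Mapping.keys v. snd a = m)"

definition graded :: "('k::field qH \<Rightarrow> 'k qH) \<Rightarrow> bool" where
  "graded f \<longleftrightarrow> (\<forall>m v. in_Hm m v \<longrightarrow> in_Hm m (f v))"

definition AutGr :: "'k::field \<Rightarrow> ('k qH \<Rightarrow> 'k qH) monoid" where
  "AutGr q = \<lparr>carrier = {f. coalg_aut q f \<and> graded f}, mult = (\<circ>), one = id\<rparr>"

definition semidir :: "((int \<Rightarrow> 'k::field) \<times> int) monoid" where
  "semidir = \<lparr>carrier = {(\<alpha>, r). \<forall>n. \<alpha> n \<noteq> 0},
     mult = (\<lambda>(\<alpha>, r) (\<beta>, t). (\<lambda>n. \<alpha> n * \<beta> (n - r), r + t)),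
     one = (\<lambda>_. 1, 0)\<rparr>"

definition theta :: "int \<Rightarrow> 'k::field qH \<Rightarrow> 'k qH" where
  "theta r = lin_ext (\<lambda>(n, m). Poly_Mapping.single (n + r, m) 1)"

definition phi :: "(int \<Rightarrow> 'k::field) \<Rightarrow> 'k qH \<Rightarrow> 'k qH" where
  "phi \<alpha> = lin_ext (\<lambda>(n, m). Poly_Mapping.single (n, m) (\<Prod>i<m. \<alpha> (n + int i)))"

definition Psi :: "(int \<Rightarrow> 'k::field) \<times> int \<Rightarrow> 'k qH \<Rightarrow> 'k qH" where
  "Psi p = phi (fst p) \<circ> theta (snd p)"

end

theory Submission
  imports Defs
begin

text \<open>A map x^n y^m \<mapsto> c(n,m) x^{n+r} y^m is linear, graded, and bijective when all weights
  c(n,m) are nonzero; it preserves the counit when c(n,0) = 1 and the comultiplication when c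
  satisfies the cocycle identity c(n,m) = c(n,i) c(n+i,m-i). The maps \<Psi>(\<alpha>,r) are exactly such
  maps with c(n,m) = \<alpha>(n+r) \<cdots> \<alpha>(n+r+m-1), which gives the homomorphism property and
  injectivity.
  Conversely, let f be a graded coalgebra automorphism. Comparing coefficients in
  \<Delta>(f v) = (f \<otimes> f)(\<Delta> v) shows that f maps the grouplike x^n to a grouplike x^{\<sigma>(n)},
  that f(x^n y) = a(n) x^{\<sigma>(n)} y with \<sigma>(n+1) = \<sigma>(n) + 1, so \<sigma> is a translation by some r,
  and, by induction on m using that the q-binomial coefficients do not vanish, that
  f(x^n y^m) = a(n) \<cdots> a(n+m-1) x^{n+r} y^m. Hence f = \<Psi>(\<alpha>,r) with \<alpha>(n) = a(n-r).\<close>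

abbreviation lookup :: "('a \<Rightarrow>\<^sub>0 'b::zero) \<Rightarrow> 'a \<Rightarrow> 'b" where
  "lookup \<equiv> Poly_Mapping.lookup"

abbreviation single :: "'a \<Rightarrow> 'b::zero \<Rightarrow> 'a \<Rightarrow>\<^sub>0 'b" where
  "single \<equiv> Poly_Mapping.single"

abbreviation keys :: "('a \<Rightarrow>\<^sub>0 'b::zero) \<Rightarrow> 'a set" where
  "keys \<equiv> Poly_Mapping.keys"

section \<open>Linear maps on finitely supported functions\<close>

lemma lookup_smul [simp]: "lookup (smul c v) k = c * lookup v k"
  by (simp add: smul_def map.rep_eq when_def)

lemma smul_single [simp]: "smul c (single k d) = single k (c * d)"
  by (rule poly_mapping_eqI) (simp add: lookup_single when_def)

lemma smul_sum: "smul c (sum g A) = (\<Sum>a\<in>A. smul c (g a))"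
  by (rule poly_mapping_eqI) (simp add: lookup_sum sum_distrib_left)

lemma lookup_lin_ext: "lookup (lin_ext g v) k = (\<Sum>a\<in>keys v. lookup v a * lookup (g a) k)"
  by (simp add: lin_ext_def lookup_sum)

lemma lookup_lin_ext_superset:
  assumes "finite S" "keys v \<subseteq> S"
  shows "lookup (lin_ext g v) k = (\<Sum>a\<in>S. lookup v a * lookup (g a) k)"
  unfolding lookup_lin_ext
  by (rule sum.mono_neutral_left) (use assms in \<open>auto simp: in_keys_iff\<close>)

lemma is_linear_lin_ext: "is_linear (lin_ext g)"
  unfolding is_linear_def
proof (intro conjI allI)
  fix u v
  show "lin_ext g (u + v) = lin_ext g u + lin_ext g v"
  proof (rule poly_mapping_eqI)
    fix k
    have "keys (u + v) \<subseteq> keys u \<union> keys v" by (rule keys_add)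
    then show "lookup (lin_ext g (u + v)) k = lookup (lin_ext g u + lin_ext g v) k"
      by (simp add: lookup_add lookup_lin_ext_superset[of "keys u \<union> keys v"]
          sum.distrib algebra_simps)
  qed
next
  fix c v
  show "lin_ext g (smul c v) = smul c (lin_ext g v)"
  proof (rule poly_mapping_eqI)
    fix k
    have "keys (smul c v) \<subseteq> keys v" by (auto simp: in_keys_iff)
    then show "lookup (lin_ext g (smul c v)) k = lookup (smul c (lin_ext g v)) k"
      by (simp add: lookup_lin_ext_superset[of "keys v"] sum_distrib_left algebra_simps)
  qed
qed

lemma lin_ext_single: "lin_ext g (single a c) = smul c (g a)"
  by (rule poly_mapping_eqI)
    (auto simp: lookup_lin_ext_superset[of "{a}"] lookup_single when_def)

lemma is_linear_0:
  assumes "is_linear f"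
  shows "f 0 = 0"
proof -
  have "f (0 + 0) = f 0 + f 0" using assms unfolding is_linear_def by blast
  then show ?thesis by simp
qed

lemma is_linear_sum: "is_linear f \<Longrightarrow> f (sum g A) = (\<Sum>a\<in>A. f (g a))"
proof (induction A rule: infinite_finite_induct)
  case (insert x F)
  then show ?case unfolding is_linear_def by simp
qed (auto simp: is_linear_0)

lemma is_linear_comp: "is_linear f \<Longrightarrow> is_linear g \<Longrightarrow> is_linear (f \<circ> g)"
  by (simp add: is_linear_def)

lemma poly_mapping_sum_single: "v = (\<Sum>a\<in>keys v. smul (lookup v a) (single a 1))"
  by (rule poly_mapping_eqI)
    (auto simp: lookup_sum lookup_single when_def in_keys_iff sum.delta)

lemma is_linear_eq_lin_ext:
  assumes "is_linear f"
  shows "f v = lin_ext (\<lambda>a. f (single a 1)) v"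
proof -
  have "f v = f (\<Sum>a\<in>keys v. smul (lookup v a) (single a 1))"
    by (rule arg_cong[where f = f], rule poly_mapping_sum_single)
  also have "\<dots> = (\<Sum>a\<in>keys v. f (smul (lookup v a) (single a 1)))"
    by (rule is_linear_sum[OF assms])
  also have "\<dots> = (\<Sum>a\<in>keys v. smul (lookup v a) (f (single a 1)))"
    using assms unfolding is_linear_def by (simp del: smul_single)
  finally show ?thesis by (simp add: lin_ext_def)
qed

lemma is_linear_eqI:
  assumes "is_linear f" "is_linear g" "\<And>a. f (single a 1) = g (single a 1)"
  shows "f = g"
proof
  fix v
  have "f v = lin_ext (\<lambda>a. f (single a 1)) v" by (rule is_linear_eq_lin_ext[OF assms(1)])
  also have "\<dots> = lin_ext (\<lambda>a. g (single a 1)) v" by (simp add: assms(3))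
  also have "\<dots> = g v" by (rule is_linear_eq_lin_ext[OF assms(2), symmetric])
  finally show "f v = g v" .
qed

section \<open>Coefficients of the comultiplication\<close>

lemma lookup_tens: "lookup (tens u v) (a, b) = lookup u a * lookup v b"
proof -
  have "lookup (tens u v) (a, b) = (\<Sum>a'\<in>keys u. if a' = a then
      (\<Sum>b'\<in>keys v. if b' = b then lookup u a' * lookup v b' else 0) else 0)"
    unfolding tens_def lookup_sum
    by (intro sum.cong refl) (auto simp: lookup_single when_def)
  also have "\<dots> = lookup u a * lookup v b"
    by (simp only: sum.delta finite_keys) (simp add: in_keys_iff)
  finally show ?thesis .
qed

lemma tens_single: "tens (single a c) (single b d) = single (a, b) (c * d)"
proof (rule poly_mapping_eqI)
  fix k :: "'a \<times> 'b"
  show "lookup (tens (single a c) (single b d)) k = lookup (single (a, b) (c * d)) k"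
    by (cases k) (simp add: lookup_tens lookup_single when_def)
qed

lemma qDelta_single: "qDelta q (single (n, m) d) =
    (\<Sum>i\<in>{0..m}. single ((n, i), (n + int i, m - i)) (d * qbinom q m i))"
  by (simp add: qDelta_def lin_ext_single smul_sum)

lemma tens_map_single:
  "tens_map f g (single (a, b) d) = smul d (tens (f (single a 1)) (g (single b 1)))"
  by (simp add: tens_map_def lin_ext_single)

lemma tens_map_qDelta: "tens_map f g (qDelta q (single (n, m) 1)) =
    (\<Sum>i\<in>{0..m}. smul (qbinom q m i)
       (tens (f (single (n, i) 1)) (g (single (n + int i, m - i) 1))))"
proof -
  have lin: "is_linear (tens_map f g)"
    unfolding tens_map_def by (rule is_linear_lin_ext)
  show ?thesis
    by (simp add: qDelta_single is_linear_sum[OF lin] tens_map_single)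
qed

lemma lookup_tens_map_qDelta: "lookup (tens_map f f (qDelta q (single (n, m) 1))) (c, d) =
    (\<Sum>i\<in>{0..m}. qbinom q m i *
       (lookup (f (single (n, i) 1)) c * lookup (f (single (n + int i, m - i) 1)) d))"
  by (simp add: tens_map_qDelta lookup_sum lookup_tens)

lemma lookup_qDelta: "lookup (qDelta q v) ((a, i), (c, i')) =
    (if c = a + int i then qbinom q (i + i') i * lookup v (a, i + i') else 0)"
proof -
  have "lookup (qDelta q v) ((a, i), (c, i')) = (\<Sum>b\<in>keys v. lookup v b *
      (if b = (a, i + i') \<and> c = a + int i then qbinom q (i + i') i else 0))"
    unfolding qDelta_def lookup_lin_ext
  proof (intro sum.cong refl arg_cong[where f = "(*) _"])
    fix b :: "int \<times> nat"
    obtain n m where b: "b = (n, m)" by force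
    have "(\<Sum>j\<in>{0..m}. lookup (single ((n, j), (n + int j, m - j)) (qbinom q m j)) ((a, i), (c, i')))
        = (\<Sum>j\<in>{0..m}. if j = i then
             (if n = a \<and> c = n + int i \<and> i' = m - i then qbinom q m i else 0) else 0)"
      by (intro sum.cong refl) (auto simp: lookup_single when_def)
    also have "\<dots> = (if b = (a, i + i') \<and> c = a + int i then qbinom q (i + i') i else 0)"
      using b by auto
    finally show "lookup (case b of (n, m) \<Rightarrow>
        \<Sum>j\<in>{0..m}. single ((n, j), (n + int j, m - j)) (qbinom q m j)) ((a, i), (c, i'))
      = (if b = (a, i + i') \<and> c = a + int i then qbinom q (i + i') i else 0)"
      by (simp add: b lookup_sum)
  qed
  also have "\<dots> = (\<Sum>b\<in>keys v. if b = (a, i + i') then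
      (if c = a + int i then qbinom q (i + i') i * lookup v b else 0) else 0)"
    by (intro sum.cong refl) auto
  also have "\<dots> = (if c = a + int i then qbinom q (i + i') i * lookup v (a, i + i') else 0)"
    by (simp only: sum.delta finite_keys) (auto simp: in_keys_iff)
  finally show ?thesis .
qed

section \<open>Weighted shifts\<close>

definition weighted_shift :: "int \<Rightarrow> (int \<Rightarrow> nat \<Rightarrow> 'k::field) \<Rightarrow> 'k qH \<Rightarrow> 'k qH" where
  "weighted_shift r c = lin_ext (\<lambda>(n, m). single (n + r, m) (c n m))"

lemma is_linear_weighted_shift: "is_linear (weighted_shift r c)"
  unfolding weighted_shift_def by (rule is_linear_lin_ext)

lemma weighted_shift_single: "weighted_shift r c (single (n, m) d) = single (n + r, m) (d * c n m)"
  by (simp add: weighted_shift_def lin_ext_single)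

lemma weighted_shift_comp:
  "weighted_shift r c \<circ> weighted_shift t d = weighted_shift (t + r) (\<lambda>n m. d n m * c (n + t) m)"
proof (rule is_linear_eqI)
  show "is_linear (weighted_shift r c \<circ> weighted_shift t d)"
    by (intro is_linear_comp is_linear_weighted_shift)
  show "is_linear (weighted_shift (t + r) (\<lambda>n m. d n m * c (n + t) m))"
    by (rule is_linear_weighted_shift)
  fix a :: "int \<times> nat"
  show "(weighted_shift r c \<circ> weighted_shift t d) (single a 1) =
      weighted_shift (t + r) (\<lambda>n m. d n m * c (n + t) m) (single a 1)"
    by (cases a) (simp add: weighted_shift_single add.assoc)
qed

lemma weighted_shift_id: "weighted_shift 0 (\<lambda>_ _. 1) = id"
proof (rule is_linear_eqI)
  show "is_linear (weighted_shift 0 (\<lambda>_ _. 1))" by (rule is_linear_weighted_shift)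
  show "is_linear (id :: 'a::field qH \<Rightarrow> _)" by (simp add: is_linear_def)
  show "weighted_shift 0 (\<lambda>_ _. 1) (single a 1) = id (single a (1::'a))" for a :: "int \<times> nat"
    by (cases a) (simp add: weighted_shift_single)
qed

lemma Psi_eq_weighted_shift:
  "Psi (\<alpha>, r) = weighted_shift r (\<lambda>n m. \<Prod>i<m. \<alpha> (n + r + int i))"
proof -
  have theta: "theta r = weighted_shift r (\<lambda>_ _. 1)"
    and phi: "phi \<alpha> = weighted_shift 0 (\<lambda>n m. \<Prod>i<m. \<alpha> (n + int i))"
    by (simp_all add: theta_def phi_def weighted_shift_def)
  show ?thesis
    unfolding Psi_def fst_conv snd_conv theta phi weighted_shift_comp by (simp add: ac_simps)
qed

lemma lookup_weighted_shift:
  "lookup (weighted_shift r c v) (n, m) = lookup v (n - r, m) * c (n - r) m"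
proof -
  have "lookup (weighted_shift r c v) (n, m) =
      (\<Sum>b\<in>keys v. if b = (n - r, m) then lookup v b * c (n - r) m else 0)"
    unfolding weighted_shift_def lookup_lin_ext
    by (intro sum.cong refl) (auto simp: lookup_single when_def split: if_splits)
  also have "\<dots> = lookup v (n - r, m) * c (n - r) m"
    by (simp only: sum.delta finite_keys) (auto simp: in_keys_iff)
  finally show ?thesis .
qed

lemma keys_weighted_shift:
  "keys (weighted_shift r c v) \<subseteq> (\<lambda>(n, m). (n + r, m)) ` keys v"
proof
  fix a assume a: "a \<in> keys (weighted_shift r c v)"
  obtain n m where nm: "a = (n, m)" by force
  have "(n - r, m) \<in> keys v"
    using a by (auto simp: nm in_keys_iff lookup_weighted_shift)
  moreover have "a = (\<lambda>(n, m). (n + r, m)) (n - r, m)" by (simp add: nm)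
  ultimately show "a \<in> (\<lambda>(n, m). (n + r, m)) ` keys v" by blast
qed

lemma graded_weighted_shift: "graded (weighted_shift r c)"
  unfolding graded_def in_Hm_def
proof (intro allI impI ballI)
  fix m v a
  assume "\<forall>b\<in>keys v. snd b = m" and "a \<in> keys (weighted_shift r c v)"
  then obtain b where "b \<in> keys v" "a = (\<lambda>(n, m). (n + r, m)) b"
    using keys_weighted_shift by blast
  with \<open>\<forall>b\<in>keys v. snd b = m\<close> show "snd a = m" by (auto split: prod.splits)
qed

lemma qeps_weighted_shift:
  assumes "\<And>n. c n 0 = 1"
  shows "qeps (weighted_shift r c v) = qeps v"
proof -
  let ?h = "\<lambda>(n::int, m::nat). (n + r, m)"
  have inj: "inj_on ?h (keys v)" by (auto simp: inj_on_def)
  have "qeps (weighted_shift r c v) =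
      (\<Sum>a\<in>?h ` keys v. if snd a = 0 then lookup (weighted_shift r c v) a else 0)"
    unfolding qeps_def
    by (intro sum.mono_neutral_left finite_imageI finite_keys keys_weighted_shift)
      (auto simp: in_keys_iff)
  also have "\<dots> = qeps v"
    unfolding qeps_def
    by (subst sum.reindex[OF inj]) (auto intro!: sum.cong simp: lookup_weighted_shift assms)
  finally show ?thesis .
qed

lemma qDelta_weighted_shift:
  assumes cocycle: "\<And>n m i. i \<le> m \<Longrightarrow> c n m = c n i * c (n + int i) (m - i)"
  shows "qDelta q (weighted_shift r c v) =
    tens_map (weighted_shift r c) (weighted_shift r c) (qDelta q v)"
proof -
  let ?w = "weighted_shift r c"
  have "qDelta q \<circ> ?w = tens_map ?w ?w \<circ> qDelta q"
  proof (rule is_linear_eqI)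
    show "is_linear (qDelta q \<circ> ?w)"
      by (intro is_linear_comp is_linear_weighted_shift) (simp add: qDelta_def is_linear_lin_ext)
    show "is_linear (tens_map ?w ?w \<circ> qDelta q)"
      by (intro is_linear_comp) (simp_all add: qDelta_def tens_map_def is_linear_lin_ext)
    fix a :: "int \<times> nat"
    obtain n m where a: "a = (n, m)" by force
    have "(qDelta q \<circ> ?w) (single a 1) = qDelta q (single (n + r, m) (1 * c n m))"
      by (simp add: a weighted_shift_single)
    also have "\<dots> = tens_map ?w ?w (qDelta q (single (n, m) 1))"
      unfolding tens_map_qDelta unfolding qDelta_single weighted_shift_single
    proof (intro sum.cong refl)
      fix i assume "i \<in> {0..m}"
      then show "single ((n + r, i), n + r + int i, m - i) (1 * c n m * qbinom q m i) =
          smul (qbinom q m i) (tens (single (n + r, i) (1 * c n i))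
            (single (n + int i + r, m - i) (1 * c (n + int i) (m - i))))"
        using cocycle[of i m n] by (simp add: tens_single ac_simps)
    qed
    finally show "(qDelta q \<circ> ?w) (single a 1) = (tens_map ?w ?w \<circ> qDelta q) (single a 1)"
      by (simp add: a)
  qed
  then show ?thesis by (metis comp_apply)
qed

lemma bij_weighted_shift:
  assumes "\<And>n m. c n m \<noteq> 0"
  shows "bij (weighted_shift r c)"
proof -
  let ?inv = "weighted_shift (- r) (\<lambda>n m. 1 / c (n - r) m)"
  have "weighted_shift r c \<circ> ?inv = id" "?inv \<circ> weighted_shift r c = id"
    using assms by (simp_all add: weighted_shift_comp weighted_shift_id)
  then show ?thesis by (metis bij_betw_def comp_eq_id_dest inj_on_id surj_id o_bij)
qed

section \<open>The homomorphism \<Psi>\<close>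

lemma prod_lessThan_split:
  fixes g :: "nat \<Rightarrow> 'a::comm_monoid_mult"
  assumes "i \<le> m"
  shows "(\<Prod>j<m. g j) = (\<Prod>j<i. g j) * (\<Prod>j<m - i. g (i + j))"
proof -
  have "(\<Prod>j<m. g j) = (\<Prod>j<i. g j) * prod g {i..<m}"
    using prod.atLeastLessThan_concat[of 0 i m g] assms by (simp add: atLeast0LessThan)
  also have "prod g {i..<m} = (\<Prod>j<m - i. g (i + j))"
    using prod.shift_bounds_nat_ivl[of g 0 i "m - i"] assms
    by (simp add: atLeast0LessThan add.commute)
  finally show ?thesis .
qed

lemma Psi_in_AutGr:
  assumes "\<forall>n. \<alpha> n \<noteq> 0"
  shows "Psi (\<alpha>, r) \<in> carrier (AutGr q)"
proof -
  let ?c = "\<lambda>n m. \<Prod>i<m. \<alpha> (n + r + int i)"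
  have "?c n m \<noteq> 0" for n m
    using assms by (simp add: prod_zero_iff)
  moreover have "?c n m = ?c n i * ?c (n + int i) (m - i)" if "i \<le> m" for n m i
    using prod_lessThan_split[OF that, of "\<lambda>j. \<alpha> (n + r + int j)"] by (simp add: ac_simps)
  ultimately show ?thesis
    unfolding AutGr_def coalg_aut_def Psi_eq_weighted_shift
    by (simp add: is_linear_weighted_shift bij_weighted_shift qDelta_weighted_shift
        qeps_weighted_shift graded_weighted_shift)
qed

lemma Psi_mult: "Psi (\<lambda>n. \<alpha> n * \<beta> (n - r), r + t) = Psi (\<alpha>, r) \<circ> Psi (\<beta>, t)"
  by (simp add: Psi_eq_weighted_shift weighted_shift_comp prod.distrib ac_simps)

lemma Psi_inj: "inj Psi"
proof (rule injI)
  fix p p' :: "(int \<Rightarrow> 'k::field) \<times> int"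
  assume eq: "Psi p = Psi p'"
  obtain \<alpha> r \<beta> t where p: "p = (\<alpha>, r)" "p' = (\<beta>, t)" by force
  have "lookup (Psi p (single (0, 0) 1)) (r, 0) = lookup (Psi p' (single (0, 0) 1)) (r, 0)"
    using eq by simp
  then have "r = t"
    by (simp add: p Psi_eq_weighted_shift weighted_shift_single lookup_single when_def
        split: if_splits)
  moreover have "\<alpha> n = \<beta> n" for n
    using arg_cong[OF eq, of "\<lambda>g. lookup (g (single (n - r, 1) 1)) (n, 1)"] \<open>r = t\<close>
    by (simp add: p Psi_eq_weighted_shift weighted_shift_single)
  ultimately show "p = p'" by (auto simp: p)
qed

section \<open>Graded coalgebra automorphisms are of the form \<Psi>(\<alpha>, r)\<close>

lemma qbinom_0_0 [simp]: "qbinom q 0 0 = 1"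
  by (simp add: qbinom_def qfact_def)

lemma qbinom_Suc_0_0 [simp]: "qbinom q (Suc 0) 0 = 1"
  by (simp add: qbinom_def qfact_def qint_def)

lemma qbinom_Suc_0_Suc_0 [simp]: "qbinom q (Suc 0) (Suc 0) = 1"
  by (simp add: qbinom_def qfact_def qint_def)

lemma sum_atLeastAtMost_0_1: "(\<Sum>i\<in>{0..1::nat}. g i) = g 0 + g 1"
  by (simp add: atLeast0_atMost_Suc add.commute)

lemma qbinom_nonzero:
  assumes "\<forall>n::nat. n > 0 \<longrightarrow> q ^ n \<noteq> 1"
  shows "qbinom q m i \<noteq> 0"
proof -
  have "qint q j \<noteq> 0" if "j > 0" for j
    using assms that power_diff_1_eq[of q j] by (auto simp: qint_def)
  then show ?thesis by (simp add: qbinom_def qfact_def)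
qed

lemma graded_lookup_eq_0:
  fixes f :: "'k::field qH \<Rightarrow> 'k qH"
  assumes "graded f" "i' \<noteq> i"
  shows "lookup (f (single (n, i) 1)) (j, i') = 0"
proof -
  have "in_Hm i (single (n, i) (1::'k))" by (simp add: in_Hm_def)
  then have "in_Hm i (f (single (n, i) 1))"
    using assms(1) unfolding graded_def by blast
  then show ?thesis using assms(2) by (force simp: in_Hm_def in_keys_iff)
qed

lemma graded_image_eq_single:
  assumes "graded f" and "\<And>j. lookup (f (single (n, m) 1)) (j, m) = (if j = s then a else 0)"
  shows "f (single (n, m) 1) = single (s, m) a"
proof (rule poly_mapping_eqI)
  fix k :: "int \<times> nat"
  obtain j i where k: "k = (j, i)" by force
  show "lookup (f (single (n, m) 1)) k = lookup (single (s, m) a) k"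
    using assms graded_lookup_eq_0[OF assms(1), of i m n j]
    by (cases "i = m") (auto simp: k lookup_single when_def)
qed

text \<open>The degree-0 coefficients of f(x^n) are orthogonal idempotents, and the counit
  forces one of them to be nonzero.\<close>

lemma grouplike_image:
  fixes f :: "'k::field qH \<Rightarrow> 'k qH"
  assumes comult: "\<And>v. qDelta q (f v) = tens_map f f (qDelta q v)"
    and counit: "\<And>v. qeps (f v) = qeps v"
    and "graded f"
  shows "\<exists>s. f (single (n, 0) 1) = single (s, 0) 1"
proof -
  let ?e = "f (single (n, 0) 1)"
  have idem: "lookup ?e (j, 0) * lookup ?e (k, 0) = (if k = j then lookup ?e (j, 0) else 0)" for j k
  proof -
    have "lookup (qDelta q ?e) ((j, 0), (k, 0)) = (if k = j then lookup ?e (j, 0) else 0)"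
      using lookup_qDelta[of q ?e j 0 k 0] by simp
    moreover have "lookup (tens_map f f (qDelta q (single (n, 0) 1))) ((j, 0), (k, 0)) =
        lookup ?e (j, 0) * lookup ?e (k, 0)"
      by (simp add: lookup_tens_map_qDelta)
    ultimately show ?thesis using comult[of "single (n, 0) 1"] by simp
  qed
  have "qeps (single (n, 0) (1::'k)) = 1"
    by (simp add: qeps_def)
  then have "qeps ?e = 1"
    using counit[of "single (n, 0) 1"] by simp
  then have "keys ?e \<noteq> {}" by (auto simp: qeps_def)
  then obtain b where "b \<in> keys ?e" by blast
  then obtain s m where sm: "(s, m) \<in> keys ?e" by (cases b) blast
  have "m = 0"
    using sm graded_lookup_eq_0[OF \<open>graded f\<close>, of m 0 n s] by (auto simp: in_keys_iff)
  then have "lookup ?e (s, 0) \<noteq> 0"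
    using sm by (simp add: in_keys_iff)
  then have es: "lookup ?e (s, 0) = 1"
    using idem[of s s] by simp
  have "lookup ?e (j, 0) = (if j = s then 1 else 0)" for j
    using idem[of s j] es by (cases "j = s") simp_all
  then have "?e = single (s, 0) 1"
    by (rule graded_image_eq_single[OF \<open>graded f\<close>])
  then show ?thesis ..
qed

text \<open>Evaluated on x^n y, the comultiplicativity compares x^n y \<otimes> x^{n+1} + x^n \<otimes> x^n y
  with f(x^n y) \<otimes> x^{\<sigma>(n+1)} + x^{\<sigma> n} \<otimes> f(x^n y).\<close>

lemma skew_primitive_image:
  assumes comult: "\<And>v. qDelta q (f v) = tens_map f f (qDelta q v)"
    and "graded f" "is_linear f" "inj f"
    and grouplike: "\<And>j. f (single (j, 0) 1) = single (\<sigma> j, 0) 1"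
  shows "\<exists>a. a \<noteq> 0 \<and> f (single (n, 1) 1) = single (\<sigma> n, 1) a \<and> \<sigma> (n + 1) = \<sigma> n + 1"
proof -
  let ?h = "f (single (n, 1) 1)"
  have coeff: "lookup (qDelta q ?h) k = lookup (tens_map f f (qDelta q (single (n, 1) 1))) k" for k
    by (simp add: comult)
  have h0: "lookup ?h (j, 0) = 0" for j
    using graded_lookup_eq_0[OF \<open>graded f\<close>] by simp
  have "lookup ?h (j, 1) = (if j = \<sigma> n then lookup ?h (\<sigma> n, 1) else 0)" for j
    using coeff[of "((j, 0), (j, 1))"]
    by (auto simp: lookup_qDelta lookup_tens_map_qDelta sum_atLeastAtMost_0_1 grouplike h0
        lookup_single when_def)
  then have h: "?h = single (\<sigma> n, 1) (lookup ?h (\<sigma> n, 1))"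
    by (rule graded_image_eq_single[OF \<open>graded f\<close>])
  have "lookup ?h (\<sigma> n, 1) \<noteq> 0"
  proof
    assume "lookup ?h (\<sigma> n, 1) = 0"
    then have "f (single (n, 1) 1) = f 0"
      using h is_linear_0[OF \<open>is_linear f\<close>] by simp
    then show False
      using injD[OF \<open>inj f\<close>] by (metis lookup_single_eq lookup_zero one_neq_zero)
  qed
  moreover have "lookup ?h (\<sigma> n, 1) = lookup ?h (\<sigma> n, 1) * (if \<sigma> (n + 1) = \<sigma> n + 1 then 1 else 0)"
    using coeff[of "((\<sigma> n, 1), (\<sigma> n + 1, 0))"]
    by (simp add: lookup_qDelta lookup_tens_map_qDelta sum_atLeastAtMost_0_1 grouplike
        lookup_single when_def)
  ultimately have "\<sigma> (n + 1) = \<sigma> n + 1" by (auto split: if_splits)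
  with h \<open>lookup ?h (\<sigma> n, 1) \<noteq> 0\<close> show ?thesis by blast
qed

lemma eq_add_if_succ_commute:
  fixes \<sigma> :: "int \<Rightarrow> int"
  assumes "\<And>n. \<sigma> (n + 1) = \<sigma> n + 1"
  shows "\<sigma> n = n + \<sigma> 0"
proof (induction n rule: int_induct[where k = 0])
  case (step2 i)
  then show ?case using assms[of "i - 1"] by simp
qed (use assms in simp_all)

text \<open>The coefficient of x^j y \<otimes> x^{j+1} y^{m+1} in \<Delta>(f(x^n y^{m+2})) is the nonzero
  q-binomial [m+2 choose 1] times the coefficient of x^j y^{m+2}, so f(x^n y^{m+2}) is determined
  by f(x^n y) and f(x^{n+1} y^{m+1}).\<close>

lemma higher_degree_image:
  assumes comult: "\<And>v. qDelta q (f v) = tens_map f f (qDelta q v)"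
    and "graded f" and q: "\<forall>n::nat. n > 0 \<longrightarrow> q ^ n \<noteq> 1"
    and degree_one: "\<And>n. f (single (n, 1) 1) = single (n + r, 1) (a n)"
  shows "f (single (n, Suc m) 1) = single (n + r, Suc m) (\<Prod>i<Suc m. a (n + int i))"
proof (induction m arbitrary: n)
  case 0
  then show ?case using degree_one[of n] by simp
next
  case (Suc m)
  let ?u = "f (single (n, Suc (Suc m)) 1)"
  let ?c = "qbinom q (Suc (Suc m)) 1"
  let ?P = "\<Prod>i<Suc m. a (n + 1 + int i)"
  have "?c * lookup ?u (j, Suc (Suc m)) = lookup (qDelta q ?u) ((j, 1), (j + 1, Suc m))" for j
    by (simp add: lookup_qDelta)
  also have "\<dots> j = (\<Sum>i\<in>{0..Suc (Suc m)}. if i = 1 then ?c * (lookup (f (single (n, 1) 1)) (j, 1)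
      * lookup (f (single (n + 1, Suc m) 1)) (j + 1, Suc m)) else 0)" for j
    unfolding comult lookup_tens_map_qDelta
    by (intro sum.cong refl) (auto simp: graded_lookup_eq_0[OF \<open>graded f\<close>])
  also have "\<dots> j = ?c * (if j = n + r then a n * ?P else 0)" for j
    using Suc.IH[of "n + 1"] by (simp add: degree_one[unfolded One_nat_def] lookup_single when_def ac_simps)
  finally have "lookup ?u (j, Suc (Suc m)) = (if j = n + r then a n * ?P else 0)" for j
    using qbinom_nonzero[OF q] by simp
  then have "?u = single (n + r, Suc (Suc m)) (a n * ?P)"
    by (rule graded_image_eq_single[OF \<open>graded f\<close>])
  moreover have "(\<Prod>i<Suc (Suc m). a (n + int i)) = a n * ?P"
    by (subst prod.lessThan_Suc_shift) (simp add: ac_simps)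
  ultimately show ?case by simp
qed

lemma AutGr_carrier_eq_Psi:
  assumes q: "\<forall>n::nat. n > 0 \<longrightarrow> q ^ n \<noteq> 1"
    and f: "f \<in> carrier (AutGr q)"
  shows "\<exists>\<alpha> r. (\<forall>n. \<alpha> n \<noteq> 0) \<and> f = Psi (\<alpha>, r)"
proof -
  have lin: "is_linear f" and "inj f" and comult: "\<And>v. qDelta q (f v) = tens_map f f (qDelta q v)"
    and "\<And>v. qeps (f v) = qeps v" and gr: "graded f"
    using f by (auto simp: AutGr_def coalg_aut_def bij_def)
  then obtain \<sigma> where \<sigma>: "\<And>n. f (single (n, 0) 1) = single (\<sigma> n, 0) 1"
    using grouplike_image by metis
  note skew = skew_primitive_image[OF comult gr lin \<open>inj f\<close> \<sigma>]
  define r where "r = \<sigma> 0"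
  have \<sigma>_eq: "\<sigma> n = n + r" for n
    unfolding r_def by (rule eq_add_if_succ_commute) (use skew in blast)
  obtain a where a: "\<And>n. a n \<noteq> 0" and deg1: "\<And>n. f (single (n, 1) 1) = single (n + r, 1) (a n)"
    using skew \<sigma>_eq by metis
  define \<alpha> where "\<alpha> j = a (j - r)" for j
  have "f = Psi (\<alpha>, r)"
  proof (rule is_linear_eqI[OF lin])
    show "is_linear (Psi (\<alpha>, r))"
      unfolding Psi_eq_weighted_shift by (rule is_linear_weighted_shift)
    fix b :: "int \<times> nat"
    obtain n m where b: "b = (n, m)" by force
    show "f (single b 1) = Psi (\<alpha>, r) (single b 1)"
      using higher_degree_image[OF comult gr q deg1] \<sigma> \<sigma>_eq
      by (cases m) (simp_all add: b Psi_eq_weighted_shift weighted_shift_single \<alpha>_def)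
  qed
  moreover have "\<forall>n. \<alpha> n \<noteq> 0" using a by (simp add: \<alpha>_def)
  ultimately show ?thesis by blast
qed

lemma Psi_image_semidir:
  assumes "\<forall>n::nat. n > 0 \<longrightarrow> q ^ n \<noteq> 1"
  shows "Psi ` carrier semidir = carrier (AutGr q)"
proof
  show "Psi ` carrier semidir \<subseteq> carrier (AutGr q)"
    using Psi_in_AutGr by (auto simp: semidir_def)
  show "carrier (AutGr q) \<subseteq> Psi ` carrier semidir"
  proof
    fix f assume "f \<in> carrier (AutGr q)"
    then obtain \<alpha> r where "\<forall>n. \<alpha> n \<noteq> 0" "f = Psi (\<alpha>, r)"
      using AutGr_carrier_eq_Psi[OF assms] by blast
    then show "f \<in> Psi ` carrier semidir" by (auto simp: semidir_def)
  qed
qed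

theorem theorem2p13:
  fixes q :: "'k::field"
  assumes "q \<noteq> 0"
    and "\<forall>n::nat. n > 0 \<longrightarrow> q ^ n \<noteq> 1"
  shows "Psi \<in> iso (semidir :: ((int \<Rightarrow> 'k) \<times> int) monoid) (AutGr q)"
proof -
  let ?G = "semidir :: ((int \<Rightarrow> 'k) \<times> int) monoid"
  have image: "Psi ` carrier ?G = carrier (AutGr q)"
    by (rule Psi_image_semidir[OF assms(2)])
  then have "Psi \<in> carrier ?G \<rightarrow> carrier (AutGr q)" by blast
  moreover have "Psi (x \<otimes>\<^bsub>?G\<^esub> y) = Psi x \<otimes>\<^bsub>AutGr q\<^esub> Psi y" for x y
    by (cases x, cases y) (simp add: semidir_def AutGr_def Psi_mult)
  ultimately show ?thesis
    unfolding iso_def hom_def bij_betw_def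
    using image inj_on_subset[OF Psi_inj subset_UNIV] by simp
qed

end
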